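(* Let $m,n$ be nonnegative integers with $0\leqslant m\leqslant n$, let $\varepsilon\in\{+1,-1\}$, and let $z\in\mathbb{C}\setminus(-\infty,1]$. Then \begin{align*} \frac{\mathrm{d}^{m}}{\mathrm{d}z^{m}}\bigl[P_{n}(z)\ln(z+\varepsilon)\bigr] &= \frac{(2m)!}{2^{m}m!}C_{n-m}^{(m+1/2)}(z)\ln(z+\varepsilon) +\frac{(2m)!}{2^{m}m!}[\psi(n+1)-\psi(n-m+1)]C_{n-m}^{(m+1/2)}(z)\\ &\quad -\frac{\varepsilon^{n+m}}{2^{m}}\sum_{k=0}^{n-m}\varepsilon^{k}\frac{(k+n+m)!\,\psi(k+n+m+1)}{k!\,(k+m)!\,(n-m-k)!}\left(\frac{z-\varepsilon}{2}\right)^{k}\\ &\quad +\varepsilon^{n}\frac{(n+m)!}{(n-m)!}(z+\varepsilon)^{-m}\sum_{k=0}^{n}\varepsilon^{k}\frac{(k+n)!\,\psi(k+n+1)}{k!\,(k+m)!\,(n-k)!}\left(\frac{z-\varepsilon}{2}\right)^{k}. \end{align*}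
   Context: $P_n(z)$ denotes the Legendre polynomial of degree $n$. $C_{j}^{(\alpha)}(z)$ denotes the Gegenbauer (ultraspherical) polynomial of degree $j$ and parameter $\alpha$. $\psi(\zeta)=\Gamma'(\zeta)/\Gamma(\zeta)$ is the digamma function. The complex plane is cut along the real axis from $-\infty$ to $+1$; for $z\in\mathbb{C}\setminus(-\infty,1]$, $\ln(z\pm1)$ denotes the principal branch of the logarithm. The case $\varepsilon=+1$ concerns $\ln(z+1)$ and the case $\varepsilon=-1$ concerns $\ln(z-1)$. *)

theory Defs
  imports "HOL-Analysis.Analysis"
begin

definition Legendre_P :: "nat \<Rightarrow> complex \<Rightarrow> complex" where
  "Legendre_P n z = (\<Sum>k\<le>n div 2. (-1)^k * of_nat (fact (2*n - 2*k))
      / (2^n * of_nat (fact k) * of_nat (fact (n - k)) * of_nat (fact (n - 2*k))) * z^(n - 2*k))"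

definition Gegenbauer_C :: "nat \<Rightarrow> complex \<Rightarrow> complex \<Rightarrow> complex" where
  "Gegenbauer_C j \<alpha> z = (\<Sum>k\<le>j div 2. (-1)^k * pochhammer \<alpha> (j - k)
      / (of_nat (fact k) * of_nat (fact (j - 2*k))) * (2*z)^(j - 2*k))"

end

theory Submission
  imports Defs "HOL-Computational_Algebra.Polynomial"
begin

(*
  Put t = eps (z - eps) / 2. Then 1 + t = eps (z + eps) / 2 and z^2 - 1 = 4 t (1 + t), so
  Rodrigues' formula turns into Murphy's expansion P_n(z) = eps^n sum_k (n+k)! / (k!^2 (n-k)!) t^k,
  and d/dz = (eps/2) d/dt keeps every derivative of P_n a polynomial in t.  The right-hand side G_m
  is written in t and verified by induction on m: G_0 = P_n ln(z + eps), and G_m' = G_(m+1).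
  Write D_m^f(t) for the second sum of the theorem with weights f in place of psi.  When G_m is
  differentiated, the logarithm contributes P_n^(m)(z) / (z + eps); since (1 + t)^m P_n^(m) is a
  constant multiple of D_m^1 (a polynomial identity), this is a multiple of (z + eps)^(-m-1).  The pole
  term (z + eps)^(-m) D_m^psi(t) differentiates to (z + eps)^(-m-1) ((1 + t) d/dt - m) D_m^psi(t).
  These recombine into the pole term of G_(m+1) plus a multiple of P_n^(m+1), which is absorbed
  by psi(n-m+1) - psi(n-m) = 1/(n-m).  The Gegenbauer form of P_n^(m) is a comparison of
  coefficients.
*)

section \<open>Polynomials and their derivatives\<close>

lemma coeff_sum_monom:
  "coeff (\<Sum>k\<le>N. monom (c k) k) i = (if i \<le> N then c i else 0)"
  by (simp add: coeff_sum coeff_monom)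

lemma coeff_sum_monom_parity:
  "coeff (\<Sum>k\<le>N div 2. monom (c k) (N - 2*k)) i =
     (if i \<le> N \<and> even (N - i) then c ((N - i) div 2) else 0)"
proof -
  have "coeff (\<Sum>k\<le>N div 2. monom (c k) (N - 2*k)) i =
      (\<Sum>k\<le>N div 2. if k = (N - i) div 2 \<and> i \<le> N \<and> even (N - i) then c k else 0)"
    unfolding coeff_sum coeff_monom by (intro sum.cong refl) auto
  also have "\<dots> = (if i \<le> N \<and> even (N - i) then c ((N - i) div 2) else 0)"
    by (cases "i \<le> N \<and> even (N - i)") (auto simp: div_le_mono intro!: sum.neutral)
  finally show ?thesis .
qed

lemma coeff_one_plus_X_power:
  "coeff ([:1, 1:] ^ n :: 'a::comm_semiring_1 poly) i = of_nat (n choose i)"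
proof (cases "i \<le> n")
  case True
  then show ?thesis by (simp add: coeff_linear_poly_power)
next
  case False
  then have "degree ([:1, 1:] ^ n :: 'a poly) < i"
    using degree_power_le[of "[:1, 1:] :: 'a poly" n] by simp
  then show ?thesis using False by (simp add: coeff_eq_0 binomial_eq_0)
qed

lemma pochhammer_of_nat_Suc:
  "pochhammer (of_nat (Suc i) :: 'a::field_char_0) m = fact (i + m) / fact i"
proof -
  have "(fact (i + m) :: 'a) = fact i * pochhammer (1 + of_nat i) m"
    unfolding pochhammer_fact pochhammer_product' by simp
  then show ?thesis by (simp add: field_simps)
qed

lemma of_nat_add_Suc_neq_0: "(of_nat i + of_nat m + 1 :: 'a::semiring_char_0) \<noteq> 0"
  by (metis of_nat_1 of_nat_add of_nat_eq_0_iff add_is_0 one_neq_zero)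

definition euler_pderiv :: "nat \<Rightarrow> 'a::idom poly \<Rightarrow> 'a poly" where
  "euler_pderiv m p = [:1, 1:] * pderiv p - smult (of_nat m) p"

lemma coeff_euler_pderiv:
  "coeff (euler_pderiv m p) i =
     of_nat (Suc i) * coeff p (Suc i) + (of_nat i - of_nat m) * coeff p i"
proof -
  have "[:1, 1:] * pderiv p = pderiv p + pCons 0 (pderiv p)" by simp
  then show ?thesis
    unfolding euler_pderiv_def by (cases i) (simp_all add: coeff_pderiv algebra_simps)
qed

lemma one_plus_X_mult_pderiv_power:
  "[:1, 1:] * pderiv ([:1, 1:] ^ m) = smult (of_nat m) ([:1, 1:] ^ m :: 'a::idom poly)"
proof (cases m)
  case (Suc k)
  have "pderiv ([:1, 1:] ^ m :: 'a poly) = smult (of_nat m) ([:1, 1:] ^ k)"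
    unfolding Suc pderiv_power_Suc by (simp add: pderiv_pCons)
  then show ?thesis unfolding Suc by (simp add: mult_smult_right)
qed simp

lemma has_field_derivative_poly_comp:
  fixes p :: "'a::real_normed_field poly"
  assumes "(g has_field_derivative a) (at z)"
  shows "((\<lambda>z. poly p (g z)) has_field_derivative a * poly (pderiv p) (g z)) (at z)"
  using DERIV_chain2[OF poly_DERIV assms] by (simp add: mult.commute)

lemma higher_deriv_poly_comp:
  fixes p :: "'a::real_normed_field poly"
  assumes "\<And>z. (g has_field_derivative a) (at z)"
  shows "(deriv ^^ m) (\<lambda>z. poly p (g z)) = (\<lambda>z. a ^ m * poly ((pderiv ^^ m) p) (g z))"
proof (induction m)
  case (Suc m)
  have "deriv (\<lambda>z. a ^ m * poly ((pderiv ^^ m) p) (g z)) z =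
      a ^ Suc m * poly ((pderiv ^^ Suc m) p) (g z)" for z
    using DERIV_cmult[OF has_field_derivative_poly_comp[OF assms], of "a ^ m"]
    by (intro DERIV_imp_deriv) (simp add: mult_ac)
  then show ?case using Suc.IH by auto
qed simp

lemma higher_deriv_poly: "(deriv ^^ m) (poly p) = poly ((pderiv ^^ m) (p :: 'a::real_normed_field poly))"
  using higher_deriv_poly_comp[of "\<lambda>z. z" 1 m p] by simp

section \<open>Legendre and Gegenbauer polynomials\<close>

definition legendre_coeff :: "nat \<Rightarrow> nat \<Rightarrow> complex" where
  "legendre_coeff n k = (-1)^k * fact (2*n - 2*k) / (2^n * fact k * fact (n - k) * fact (n - 2*k))"

definition legendre_poly :: "nat \<Rightarrow> complex poly" where
  "legendre_poly n = (\<Sum>k\<le>n div 2. monom (legendre_coeff n k) (n - 2*k))"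

lemma Legendre_P_eq_poly: "Legendre_P n = poly (legendre_poly n)"
  by (rule ext) (simp add: Legendre_P_def legendre_poly_def legendre_coeff_def poly_sum poly_monom)

lemma coeff_X_squared_minus_one_power:
  "coeff ([:-1, 0, 1:] ^ n :: 'a::comm_ring_1 poly) j =
     (if even j \<and> j div 2 \<le> n then of_nat (n choose (j div 2)) * (-1) ^ (n - j div 2) else 0)"
proof -
  have "[:-1, 0, 1:] = monom (1::'a) 2 + [:-1:]" by (simp add: monom_altdef power2_eq_square)
  then have "[:-1, 0, 1:] ^ n = (\<Sum>k\<le>n. of_nat (n choose k) * monom (1::'a) 2 ^ k * [:-1:] ^ (n - k))"
    by (simp add: binomial_ring)
  also have "\<dots> = (\<Sum>k\<le>n. monom (of_nat (n choose k) * (-1) ^ (n - k)) (2*k))"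
    by (intro sum.cong refl)
      (simp add: monom_power of_nat_poly smult_monom pCons_one monom_0 [symmetric] mult_monom)
  finally have "coeff ([:-1, 0, 1:] ^ n) j =
      (\<Sum>k\<le>n. if k = j div 2 \<and> even j then of_nat (n choose k) * (-1) ^ (n - k) else (0::'a))"
    by (simp add: coeff_sum coeff_monom) (intro sum.cong refl, auto)
  then show ?thesis by auto
qed

lemma legendre_poly_Rodrigues:
  "legendre_poly n = smult (1 / (2^n * fact n)) ((pderiv ^^ n) ([:-1, 0, 1:] ^ n))"
proof (rule poly_eqI)
  fix i
  show "coeff (legendre_poly n) i = coeff (smult (1 / (2^n * fact n)) ((pderiv ^^ n) ([:-1, 0, 1:] ^ n))) i"
  proof (cases "i \<le> n \<and> even (n - i)")
    case True
    define k where "k = (n - i) div 2"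
    have i: "i = n - 2*k" "2*k \<le> n" using True unfolding k_def by auto
    have j: "(i + n) div 2 = n - k" "even (i + n)" "n - (n - k) = k" "i + n = 2*n - 2*k"
      using i by auto
    have "coeff (smult (1 / (2^n * fact n)) ((pderiv ^^ n) ([:-1, 0, 1:] ^ n :: complex poly))) i
       = 1 / (2^n * fact n) * (fact (2*n - 2*k) / fact (n - 2*k)) * (of_nat (n choose (n - k)) * (-1)^k)"
      unfolding coeff_smult coeff_higher_pderiv pochhammer_of_nat_Suc coeff_X_squared_minus_one_power
      using i j by simp
    also have "\<dots> = legendre_coeff n k"
      unfolding legendre_coeff_def binomial_fact[OF diff_le_self] using i(2) by (simp add: field_simps)
    also have "\<dots> = coeff (legendre_poly n) i"
      unfolding legendre_poly_def coeff_sum_monom_parity k_def by (simp only: if_P[OF True])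
    finally show ?thesis ..
  next
    case False
    then have "\<not> (even (i + n) \<and> (i + n) div 2 \<le> n)" by presburger
    then have "coeff ([:-1, 0, 1:] ^ n :: complex poly) (i + n) = 0"
      unfolding coeff_X_squared_minus_one_power by (rule if_not_P)
    moreover have "coeff (legendre_poly n) i = 0"
      unfolding legendre_poly_def coeff_sum_monom_parity by (rule if_not_P[OF False])
    ultimately show ?thesis by (simp add: coeff_higher_pderiv)
  qed
qed

lemma fact_double_pochhammer:
  assumes "2*k + m \<le> n"
  shows "fact (2*m) / (2^m * fact m) * pochhammer (of_nat m + 1/2 :: 'a::field_char_0) (n - m - k) * 2^(n - m - 2*k)
     = fact (2*n - 2*k) / (2^n * fact (n - k))"
proof -
  define J where "J = n - k"
  have J: "2*n - 2*k = 2*J" "n - m - k = J - m" "J = m + (J - m)"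
    using assms unfolding J_def by auto
  have p: "pochhammer (1/2::'a) J = pochhammer (1/2) m * pochhammer (of_nat m + 1/2) (J - m)"
    using pochhammer_product'[of "1/2::'a" m "J - m"] J(3) by (simp add: add_ac)
  have "(2::'a)^(2*m) * 2^(n - m - 2*k) = 2^m * 2^(n - 2*k)"
    using assms by (simp flip: power_add)
  then have "fact (2*m) / (2^m * fact m) * pochhammer (of_nat m + 1/2 :: 'a) (n - m - k) * 2^(n - m - 2*k)
     = 2^(n - 2*k) * pochhammer (1/2) J"
    unfolding fact_double J(2) p by (simp add: field_simps)
  also have "\<dots> = fact (2*n - 2*k) / (2^n * fact (n - k))"
  proof -
    have "2*J = n + (n - 2*k)" using assms unfolding J_def by simp
    then have "(2::'a)^(2*J) = 2^n * 2^(n - 2*k)" by (simp add: power_add)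
    then show ?thesis unfolding J(1) fact_double J_def[symmetric] by (simp add: field_simps)
  qed
  finally show ?thesis .
qed

definition scaled_gegenbauer_coeff :: "nat \<Rightarrow> nat \<Rightarrow> nat \<Rightarrow> complex" where
  "scaled_gegenbauer_coeff n m k = fact (2*m) / (2^m * fact m) * pochhammer (of_nat m + 1/2) (n - m - k)
     * 2^(n - m - 2*k) * ((-1)^k / (fact k * fact (n - m - 2*k)))"

definition scaled_gegenbauer_poly :: "nat \<Rightarrow> nat \<Rightarrow> complex poly" where
  "scaled_gegenbauer_poly n m = (\<Sum>k\<le>(n - m) div 2. monom (scaled_gegenbauer_coeff n m k) (n - m - 2*k))"

lemma Gegenbauer_C_eq_poly:
  "fact (2*m) / (2^m * fact m) * Gegenbauer_C (n - m) (of_nat m + 1/2) z = poly (scaled_gegenbauer_poly n m) z"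
  unfolding Gegenbauer_C_def scaled_gegenbauer_poly_def scaled_gegenbauer_coeff_def poly_sum poly_monom
    sum_distrib_left
  by (intro sum.cong refl) (simp add: power_mult_distrib ac_simps)

lemma scaled_gegenbauer_coeff_eq:
  assumes "2*k + m \<le> n"
  shows "scaled_gegenbauer_coeff n m k = fact (n - 2*k) / fact (n - m - 2*k) * legendre_coeff n k"
  unfolding scaled_gegenbauer_coeff_def fact_double_pochhammer[OF assms] legendre_coeff_def
  by (simp add: field_simps)

lemma scaled_gegenbauer_poly_eq_higher_pderiv:
  assumes "m \<le> n"
  shows "scaled_gegenbauer_poly n m = (pderiv ^^ m) (legendre_poly n)"
proof (rule poly_eqI)
  fix i
  show "coeff (scaled_gegenbauer_poly n m) i = coeff ((pderiv ^^ m) (legendre_poly n)) i"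
  proof (cases "i \<le> n - m \<and> even (n - m - i)")
    case True
    define k where "k = (n - m - i) div 2"
    have i: "2*k + m \<le> n" "i + m = n - 2*k" "n - (i + m) = n - m - i" "i = n - m - 2*k"
      using True assms unfolding k_def by auto
    have "coeff (scaled_gegenbauer_poly n m) i = scaled_gegenbauer_coeff n m k"
      unfolding scaled_gegenbauer_poly_def coeff_sum_monom_parity k_def by (simp only: if_P[OF True])
    also have "\<dots> = fact (i + m) / fact i * legendre_coeff n k"
      unfolding scaled_gegenbauer_coeff_eq[OF i(1)] i(2) i(4)[symmetric] ..
    also have "\<dots> = coeff ((pderiv ^^ m) (legendre_poly n)) i"
    proof -
      have c: "i + m \<le> n \<and> even (n - m - i)" using True assms by auto
      show ?thesis
        unfolding coeff_higher_pderiv pochhammer_of_nat_Suc legendre_poly_def coeff_sum_monom_parity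
          if_P[OF c] i(3) k_def ..
    qed
    finally show ?thesis .
  next
    case False
    then have "\<not> (i + m \<le> n \<and> even (n - (i + m)))"
      using assms by (auto simp: add.commute diff_diff_left)
    then have "coeff (legendre_poly n) (i + m) = 0"
      unfolding legendre_poly_def coeff_sum_monom_parity by (rule if_not_P)
    moreover have "coeff (scaled_gegenbauer_poly n m) i = 0"
      unfolding scaled_gegenbauer_poly_def coeff_sum_monom_parity by (rule if_not_P[OF False])
    ultimately show ?thesis by (simp add: coeff_higher_pderiv)
  qed
qed

lemma Gegenbauer_C_eq_higher_deriv_Legendre_P:
  assumes "m \<le> n"
  shows "fact (2*m) / (2^m * fact m) * Gegenbauer_C (n - m) (of_nat m + 1/2) z = (deriv ^^ m) (Legendre_P n) z"
  unfolding Gegenbauer_C_eq_poly scaled_gegenbauer_poly_eq_higher_pderiv[OF assms] Legendre_P_eq_poly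
    higher_deriv_poly ..

section \<open>Murphy's expansion\<close>

definition murphy_coeff :: "nat \<Rightarrow> nat \<Rightarrow> nat \<Rightarrow> 'a::field_char_0" where
  "murphy_coeff n m k = fact (k + n + m) / (fact k * fact (k + m) * fact (n - m - k))"

definition murphy_poly :: "nat \<Rightarrow> nat \<Rightarrow> (nat \<Rightarrow> 'a::field_char_0) \<Rightarrow> 'a poly" where
  "murphy_poly n m f = (\<Sum>k\<le>n - m. monom (murphy_coeff n m k * f (k + n + m)) k)"

lemma murphy_coeff_Suc:
  assumes "Suc i \<le> n - m"
  shows "of_nat (Suc i) * murphy_coeff n m (Suc i) = (murphy_coeff n (Suc m) i :: 'a::field_char_0)"
proof -
  have "n - m - Suc i = n - Suc m - i" "Suc i + n + m = i + n + Suc m" "Suc i + m = i + Suc m"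
    using assms by simp_all
  moreover have "(fact (Suc i) :: 'a) = of_nat (Suc i) * fact i" by (simp add: fact_Suc)
  ultimately show ?thesis
    unfolding murphy_coeff_def by (simp add: field_simps del: of_nat_Suc)
qed

lemma pderiv_murphy_poly:
  assumes "m < n"
  shows "pderiv (murphy_poly n m f) = murphy_poly n (Suc m) f"
proof (rule poly_eqI)
  fix i
  show "coeff (pderiv (murphy_poly n m f)) i = coeff (murphy_poly n (Suc m) f) i"
    unfolding coeff_pderiv murphy_poly_def coeff_sum_monom
    using murphy_coeff_Suc[of i n m] assms
    by (auto simp: mult.assoc[symmetric] simp del: of_nat_Suc)
qed

lemma higher_pderiv_murphy_poly:
  "m \<le> n \<Longrightarrow> (pderiv ^^ m) (murphy_poly n 0 f) = murphy_poly n m f"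
  by (induction m) (simp_all add: pderiv_murphy_poly)

definition pole_coeff :: "nat \<Rightarrow> nat \<Rightarrow> nat \<Rightarrow> 'a::field_char_0" where
  "pole_coeff n m k = fact (k + n) / (fact k * fact (k + m) * fact (n - k))"

definition pole_poly :: "nat \<Rightarrow> nat \<Rightarrow> (nat \<Rightarrow> 'a::field_char_0) \<Rightarrow> 'a poly" where
  "pole_poly n m f = (\<Sum>k\<le>n. monom (pole_coeff n m k * f (k + n)) k)"

lemma murphy_poly_0: "murphy_poly n 0 f = pole_poly n 0 f"
  by (simp add: murphy_poly_def pole_poly_def murphy_coeff_def pole_coeff_def)

lemma coeff_pole_poly: "coeff (pole_poly n m f) i = (if i \<le> n then pole_coeff n m i * f (i + n) else 0)"
  unfolding pole_poly_def coeff_sum_monom ..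

lemma pole_coeff_Suc_right:
  "pole_coeff n m i = (of_nat i + of_nat m + 1) * (pole_coeff n (Suc m) i :: 'a::field_char_0)"
proof -
  define x :: 'a where "x = of_nat i + of_nat m + 1"
  have "x \<noteq> 0" unfolding x_def by (rule of_nat_add_Suc_neq_0)
  moreover have "fact (i + Suc m) = x * fact (i + m)" by (simp add: fact_Suc x_def add_ac)
  ultimately show ?thesis
    unfolding pole_coeff_def x_def[symmetric] by (simp add: field_simps)
qed

lemma pole_coeff_Suc_left:
  assumes "i < n"
  shows "of_nat (Suc i) * pole_coeff n m (Suc i) =
    (of_nat n - of_nat i) * (of_nat n + of_nat i + 1) * (pole_coeff n (Suc m) i :: 'a::field_char_0)"
proof -
  define x :: 'a where "x = of_nat i + of_nat m + 1"
  define y :: 'a where "y = of_nat n + of_nat i + 1"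
  define d :: 'a where "d = of_nat n - of_nat i"
  have "x \<noteq> 0" "y \<noteq> 0" using of_nat_add_Suc_neq_0 unfolding x_def y_def by blast+
  moreover have "d \<noteq> 0" using assms unfolding d_def by simp
  moreover have "fact (Suc i) = of_nat (Suc i) * (fact i :: 'a)"
    "fact (Suc i + n) = y * (fact (i + n) :: 'a)"
    "fact (Suc i + m) = x * (fact (i + m) :: 'a)"
    "fact (i + Suc m) = x * (fact (i + m) :: 'a)"
    "fact (n - i) = d * (fact (n - Suc i) :: 'a)"
    using assms by (simp_all add: fact_Suc x_def y_def d_def add_ac of_nat_diff Suc_diff_Suc[symmetric])
  ultimately show ?thesis
    unfolding pole_coeff_def d_def[symmetric] y_def[symmetric] by (simp add: field_simps del: of_nat_Suc)
qed

lemma coeff_euler_pderiv_pole_poly: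
  "coeff (euler_pderiv m (pole_poly n m f)) i =
    (if i \<le> n then pole_coeff n (Suc m) i *
       ((of_nat n - of_nat i) * (of_nat n + of_nat i + 1) * f (Suc (i + n))
        + (of_nat i - of_nat m) * (of_nat i + of_nat m + 1) * f (i + n))
     else 0)"
proof (cases "i < n")
  case True
  have "coeff (euler_pderiv m (pole_poly n m f)) i =
      of_nat (Suc i) * pole_coeff n m (Suc i) * f (Suc (i + n)) + (of_nat i - of_nat m) * (pole_coeff n m i * f (i + n))"
    using True by (simp add: coeff_euler_pderiv coeff_pole_poly del: of_nat_Suc)
  then show ?thesis
    unfolding pole_coeff_Suc_left[OF True] pole_coeff_Suc_right[of n m i] using True
    by (simp add: algebra_simps)
next
  case False
  then show ?thesis
    unfolding coeff_euler_pderiv coeff_pole_poly pole_coeff_Suc_right[of n m i]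
    by (auto simp: algebra_simps)
qed

lemma euler_pderiv_pole_poly_const:
  "euler_pderiv m (pole_poly n m (\<lambda>_. c)) =
     smult ((of_nat n - of_nat m) * (of_nat n + of_nat m + 1)) (pole_poly n (Suc m) (\<lambda>_. c))"
proof (rule poly_eqI)
  fix i
  have "(of_nat n - of_nat i) * (of_nat n + of_nat i + 1) + (of_nat i - of_nat m) * (of_nat i + of_nat m + 1)
      = (of_nat n - of_nat m) * (of_nat n + of_nat m + (1 :: 'a))"
    by (simp add: algebra_simps)
  then show "coeff (euler_pderiv m (pole_poly n m (\<lambda>_. c))) i =
      coeff (smult ((of_nat n - of_nat m) * (of_nat n + of_nat m + 1)) (pole_poly n (Suc m) (\<lambda>_. c))) i"
    unfolding coeff_euler_pderiv_pole_poly coeff_smult coeff_pole_poly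
    by (simp add: algebra_simps)
qed

lemma euler_pderiv_pole_poly_harmonic:
  fixes f :: "nat \<Rightarrow> 'a::field_char_0"
  assumes f: "\<And>j. f (Suc j) = f j + 1 / (of_nat j + 1)"
  shows "euler_pderiv m (pole_poly n m f) + pole_poly n m (\<lambda>_. 1) =
     smult ((of_nat n - of_nat m) * (of_nat n + of_nat m + 1)) (pole_poly n (Suc m) f)
     + smult (of_nat n + of_nat m + 1) (pole_poly n (Suc m) (\<lambda>_. 1))"
proof (rule poly_eqI)
  fix i
  have nz: "(of_nat n + of_nat i + 1 :: 'a) \<noteq> 0" by (rule of_nat_add_Suc_neq_0)
  have f_Suc: "f (Suc (i + n)) = f (i + n) + 1 / (of_nat n + of_nat i + 1)"
    using f[of "i + n"] by (simp add: add_ac)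
  then show "coeff (euler_pderiv m (pole_poly n m f) + pole_poly n m (\<lambda>_. 1)) i =
      coeff (smult ((of_nat n - of_nat m) * (of_nat n + of_nat m + 1)) (pole_poly n (Suc m) f)
        + smult (of_nat n + of_nat m + 1) (pole_poly n (Suc m) (\<lambda>_. 1))) i"
    unfolding coeff_add coeff_euler_pderiv_pole_poly coeff_smult coeff_pole_poly
      pole_coeff_Suc_right[of n m i] f_Suc
    using nz by (simp add: field_simps)
qed

definition fact_ratio :: "nat \<Rightarrow> nat \<Rightarrow> 'a::field_char_0" where
  "fact_ratio n m = fact (n + m) / fact (n - m)"

lemma fact_ratio_Suc:
  assumes "m < n"
  shows "fact_ratio n (Suc m) = (of_nat n - of_nat m) * (of_nat n + of_nat m + 1) * (fact_ratio n m :: 'a::field_char_0)"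
proof -
  define y :: 'a where "y = of_nat n + of_nat m + 1"
  define d :: 'a where "d = of_nat n - of_nat m"
  have "d \<noteq> 0" using assms unfolding d_def by simp
  moreover have "fact (n + Suc m) = y * (fact (n + m) :: 'a)"
    "fact (n - m) = d * (fact (n - Suc m) :: 'a)"
    using assms by (simp_all add: fact_Suc y_def d_def add_ac of_nat_diff Suc_diff_Suc[symmetric])
  ultimately show ?thesis
    unfolding fact_ratio_def d_def[symmetric] y_def[symmetric] by (simp add: field_simps)
qed

lemma one_plus_X_power_mult_murphy_poly:
  "m \<le> n \<Longrightarrow>
    [:1, 1:] ^ m * murphy_poly n m (\<lambda>_. 1) = smult (fact_ratio n m) (pole_poly n m (\<lambda>_. 1 :: 'a::field_char_0))"
proof (induction m)
  case 0
  show ?case by (simp add: murphy_poly_0 fact_ratio_def)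
next
  case (Suc m)
  then have mn: "m < n" by simp
  let ?s = "[:1, 1:] :: 'a poly" and ?K = "fact_ratio n m :: 'a"
  let ?A = "murphy_poly n m (\<lambda>_. 1 :: 'a)" and ?A' = "murphy_poly n (Suc m) (\<lambda>_. 1 :: 'a)"
  let ?D = "pole_poly n m (\<lambda>_. 1 :: 'a)"
  have "pderiv (?s ^ m * ?A) = pderiv (?s ^ m) * ?A + ?s ^ m * ?A'"
    by (simp add: pderiv_mult pderiv_murphy_poly[OF mn])
  then have "?s * pderiv (?s ^ m * ?A) = (?s * pderiv (?s ^ m)) * ?A + ?s ^ Suc m * ?A'"
    by (simp only: distrib_left mult.assoc power_Suc)
  also have "\<dots> = smult (of_nat m) (?s ^ m * ?A) + ?s ^ Suc m * ?A'"
    by (simp only: one_plus_X_mult_pderiv_power mult_smult_left)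
  finally have "?s ^ Suc m * ?A' = smult ?K (?s * pderiv ?D) - smult (of_nat m) (smult ?K ?D)"
    using Suc.IH mn by (simp add: pderiv_smult)
  also have "\<dots> = smult ?K (euler_pderiv m ?D)"
    by (simp add: euler_pderiv_def smult_diff_right mult.commute)
  finally show ?case
    by (simp add: euler_pderiv_pole_poly_const fact_ratio_Suc[OF mn] mult_ac)
qed

lemma higher_pderiv_Rodrigues_Murphy:
  "(pderiv ^^ n) (monom 1 n * [:1, 1:] ^ n) = smult (fact n) (murphy_poly n 0 (\<lambda>_. 1 :: 'a::field_char_0))"
proof (rule poly_eqI)
  fix i
  show "coeff ((pderiv ^^ n) (monom 1 n * [:1, 1:] ^ n)) i = coeff (smult (fact n) (murphy_poly n 0 (\<lambda>_. 1 :: 'a))) i"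
  proof (cases "i \<le> n")
    case True
    have "coeff ((pderiv ^^ n) (monom 1 n * [:1, 1:] ^ n)) i = fact (i + n) / fact i * (of_nat (n choose i) :: 'a)"
      unfolding coeff_higher_pderiv pochhammer_of_nat_Suc coeff_monom_mult coeff_one_plus_X_power by simp
    also have "\<dots> = fact n * murphy_coeff n 0 i"
      unfolding murphy_coeff_def binomial_fact[OF True] by (simp add: field_simps)
    finally show ?thesis using True by (simp add: murphy_poly_def coeff_sum_monom)
  next
    case False
    then show ?thesis
      by (simp add: coeff_higher_pderiv coeff_monom_mult coeff_one_plus_X_power binomial_eq_0
          murphy_poly_def coeff_sum_monom)
  qed
qed

definition murphy_var :: "complex \<Rightarrow> complex \<Rightarrow> complex" where
  "murphy_var e z = e * (z - e) / 2"

lemma has_field_derivative_murphy_var: "(murphy_var e has_field_derivative e / 2) (at z)"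
  unfolding murphy_var_def by (auto intro!: derivative_eq_intros)

lemma one_plus_murphy_var: "e^2 = 1 \<Longrightarrow> 1 + murphy_var e z = e * (z + e) / 2"
  unfolding murphy_var_def by (simp add: field_simps power2_eq_square)

lemma X_squared_minus_one_murphy_var: "e^2 = 1 \<Longrightarrow> z^2 - 1 = 4 * murphy_var e z * (1 + murphy_var e z)"
  unfolding murphy_var_def by (simp add: field_simps power2_eq_square)

lemma murphy_var_power: "murphy_var e z ^ k = e^k * ((z - e) / 2)^k"
  unfolding murphy_var_def by (simp add: power_mult_distrib flip: times_divide_eq_right)

lemma Legendre_P_Murphy:
  assumes "e^2 = 1"
  shows "Legendre_P n z = e^n * poly (murphy_poly n 0 (\<lambda>_. 1)) (murphy_var e z)"
proof -
  let ?T = "monom 1 n * [:1, 1:] ^ n :: complex poly"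
  have rodrigues_var: "poly ([:-1, 0, 1:] ^ n) = (\<lambda>z. poly (smult (4^n) ?T) (murphy_var e z))"
  proof
    fix w :: complex
    have "poly [:-1, 0, 1:] w = w^2 - 1" by (simp add: power2_eq_square)
    then have "poly ([:-1, 0, 1:] ^ n) w = (w^2 - 1)^n" unfolding poly_power by simp
    then show "poly ([:-1, 0, 1:] ^ n) w = poly (smult (4^n) ?T) (murphy_var e w)"
      unfolding X_squared_minus_one_murphy_var[OF assms]
      by (simp add: poly_power poly_monom power_mult_distrib)
  qed
  have "Legendre_P n z = 1 / (2^n * fact n) * (deriv ^^ n) (poly ([:-1, 0, 1:] ^ n)) z"
    unfolding Legendre_P_eq_poly legendre_poly_Rodrigues higher_deriv_poly by simp
  also have "\<dots> = 1 / (2^n * fact n) * (e / 2)^n * 4^n * fact n * poly (murphy_poly n 0 (\<lambda>_. 1)) (murphy_var e z)"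
    unfolding rodrigues_var higher_deriv_poly_comp[OF has_field_derivative_murphy_var]
      higher_pderiv_smult higher_pderiv_Rodrigues_Murphy by simp
  also have "(4::complex)^n = 2^n * 2^n" by (simp flip: power_mult_distrib)
  finally show ?thesis by (simp add: power_divide)
qed

lemma higher_deriv_Legendre_P:
  assumes "e^2 = 1" "m \<le> n"
  shows "(deriv ^^ m) (Legendre_P n) z = e^(n + m) / 2^m * poly (murphy_poly n m (\<lambda>_. 1)) (murphy_var e z)"
proof -
  have L: "Legendre_P n = (\<lambda>z. poly (smult (e^n) (murphy_poly n 0 (\<lambda>_. 1))) (murphy_var e z))"
    using Legendre_P_Murphy[OF assms(1)] by auto
  show ?thesis
    unfolding L higher_deriv_poly_comp[OF has_field_derivative_murphy_var] higher_pderiv_smult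
      higher_pderiv_murphy_poly[OF assms(2)]
    by (simp add: power_add power_divide)
qed

lemma murphy_poly_eq_pole_poly:
  assumes "e^2 = 1" "m \<le> n" "w + e \<noteq> 0"
  shows "e^(n + m) / 2^m * poly (murphy_poly n m (\<lambda>_. 1)) (murphy_var e w) =
    e^n * fact_ratio n m * inverse ((w + e)^m) * poly (pole_poly n m (\<lambda>_. 1)) (murphy_var e w)"
proof -
  let ?A = "poly (murphy_poly n m (\<lambda>_. 1)) (murphy_var e w)"
  have "(e * (w + e) / 2)^m * ?A = fact_ratio n m * poly (pole_poly n m (\<lambda>_. 1)) (murphy_var e w)"
    using arg_cong[OF one_plus_X_power_mult_murphy_poly[OF assms(2)], of "\<lambda>p. poly p (murphy_var e w)"]
    by (simp add: poly_power one_plus_murphy_var[OF assms(1)])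
  moreover have "e^(n + m) / 2^m * ?A = e^n * ((e * (w + e) / 2)^m * ?A) * inverse ((w + e)^m)"
  proof -
    have "(e * (w + e) / 2)^m = e^m * (w + e)^m / 2^m" by (simp add: power_mult_distrib power_divide)
    then show ?thesis using assms(3) by (simp add: power_add field_simps)
  qed
  ultimately show ?thesis by (simp add: ac_simps)
qed

lemma has_field_derivative_pole_term:
  assumes "e^2 = 1" "w + e \<noteq> 0"
  shows "((\<lambda>w. inverse ((w + e)^m) * poly p (murphy_var e w)) has_field_derivative
    inverse ((w + e)^Suc m) * poly (euler_pderiv m p) (murphy_var e w)) (at w)"
proof -
  have inv: "power_int (w + e) (- int k) = inverse ((w + e)^k)" for w k
    by (simp add: power_int_minus)
  have "((\<lambda>w. power_int (w + e) (- int m)) has_field_derivative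
      of_int (- int m) * power_int (w + e) (- int m - 1) * 1) (at w)"
    using assms(2) by (intro DERIV_power_int) (auto intro!: derivative_eq_intros)
  moreover have "- int m - 1 = - int (Suc m)" by simp
  ultimately have "((\<lambda>w. inverse ((w + e)^m)) has_field_derivative - of_nat m * inverse ((w + e)^Suc m)) (at w)"
    by (simp only: inv) simp
  from DERIV_mult'[OF this has_field_derivative_poly_comp[OF has_field_derivative_murphy_var]]
  show ?thesis
  proof (rule DERIV_cong)
    have "(1 + murphy_var e w) * inverse (w + e) = e / 2 * ((w + e) * inverse (w + e))"
      by (simp add: one_plus_murphy_var[OF assms(1)] ac_simps)
    then have half: "e / 2 = (1 + murphy_var e w) * inverse (w + e)"
      using assms(2) by simp
    have "inverse ((w + e)^m) * (e / 2 * poly (pderiv p) (murphy_var e w)) =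
        inverse ((w + e)^Suc m) * ((1 + murphy_var e w) * poly (pderiv p) (murphy_var e w))"
      unfolding half by (simp add: inverse_mult_distrib ac_simps)
    then show "inverse ((w + e)^m) * (e / 2 * poly (pderiv p) (murphy_var e w)) +
        - of_nat m * inverse ((w + e)^Suc m) * poly p (murphy_var e w) =
        inverse ((w + e)^Suc m) * poly (euler_pderiv m p) (murphy_var e w)"
      unfolding euler_pderiv_def by (simp add: algebra_simps del: power_Suc)
  qed
qed

lemma poly_murphy_poly_murphy_var:
  "poly (murphy_poly n m f) (murphy_var e z) =
     (\<Sum>k\<le>n - m. e^k * murphy_coeff n m k * f (k + n + m) * ((z - e) / 2)^k)"
  unfolding murphy_poly_def poly_sum poly_monom murphy_var_power by (simp add: ac_simps)

lemma poly_pole_poly_murphy_var: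
  "poly (pole_poly n m f) (murphy_var e z) =
     (\<Sum>k\<le>n. e^k * pole_coeff n m k * f (k + n) * ((z - e) / 2)^k)"
  unfolding pole_poly_def poly_sum poly_monom murphy_var_power by (simp add: ac_simps)

section \<open>The closed form of the derivatives\<close>

definition digamma_nat :: "nat \<Rightarrow> complex" where
  "digamma_nat j = Digamma (of_nat (j + 1))"

lemma digamma_nat_Suc: "digamma_nat (Suc j) = digamma_nat j + 1 / (of_nat j + 1)"
proof -
  have "(of_nat (j + 1) :: complex) \<noteq> 0" by (simp only: of_nat_eq_0_iff)
  from Digamma_plus1[OF this] show ?thesis unfolding digamma_nat_def by (simp add: add_ac)
qed

(*
  The right-hand side of the theorem in the variable t = murphy_var e w: the Gegenbauer term is
  e^(n+m)/2^m * murphy_poly n m (\<lambda>_. 1), and the two sums are murphy_poly n m digamma_nat and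
  pole_poly n m digamma_nat.
*)
definition log_legendre_deriv :: "nat \<Rightarrow> complex \<Rightarrow> nat \<Rightarrow> complex \<Rightarrow> complex" where
  "log_legendre_deriv n e m w =
     e^(n + m) / 2^m * poly (murphy_poly n m (\<lambda>_. 1)) (murphy_var e w) * Ln (w + e)
     + (digamma_nat n - digamma_nat (n - m)) * (e^(n + m) / 2^m * poly (murphy_poly n m (\<lambda>_. 1)) (murphy_var e w))
     - e^(n + m) / 2^m * poly (murphy_poly n m digamma_nat) (murphy_var e w)
     + e^n * fact_ratio n m * (inverse ((w + e)^m) * poly (pole_poly n m digamma_nat) (murphy_var e w))"

lemma log_legendre_deriv_0:
  assumes "e^2 = 1"
  shows "log_legendre_deriv n e 0 w = Legendre_P n w * Ln (w + e)"
  unfolding log_legendre_deriv_def Legendre_P_Murphy[OF assms] murphy_poly_0 by (simp add: fact_ratio_def)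

lemma digamma_nat_diff_Suc:
  assumes "m < n"
  shows "digamma_nat n - digamma_nat (n - Suc m) =
    digamma_nat n - digamma_nat (n - m) + 1 / (of_nat n - of_nat m)"
proof -
  have "n - m = Suc (n - Suc m)" using assms by simp
  then show ?thesis using digamma_nat_Suc[of "n - Suc m"] assms by (simp add: of_nat_diff)
qed

lemma pole_term_recombination:
  assumes e: "e^2 = 1" and mn: "m < n" and W: "w + e \<noteq> 0"
  shows "e^(n + m) / 2^m * poly (murphy_poly n m (\<lambda>_. 1)) (murphy_var e w) * inverse (w + e)
      + e^n * fact_ratio n m * (inverse ((w + e)^Suc m) *
          poly (euler_pderiv m (pole_poly n m digamma_nat)) (murphy_var e w))
    = e^(n + Suc m) / 2^Suc m * poly (murphy_poly n (Suc m) (\<lambda>_. 1)) (murphy_var e w) / (of_nat n - of_nat m)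
      + e^n * fact_ratio n (Suc m) * (inverse ((w + e)^Suc m) *
          poly (pole_poly n (Suc m) digamma_nat) (murphy_var e w))"
    (is "?c * ?A * _ + _ * ?K * (?I * ?E) = ?c' * ?A' / _ + _ * ?K' * (?I * ?P')")
proof -
  define D where "D = poly (pole_poly n m (\<lambda>_. 1)) (murphy_var e w)"
  define D' where "D' = poly (pole_poly n (Suc m) (\<lambda>_. 1)) (murphy_var e w)"
  have "?c * ?A = e^n * ?K * inverse ((w + e)^m) * D"
    unfolding D_def by (rule murphy_poly_eq_pole_poly[OF e less_imp_le[OF mn] W])
  moreover have "inverse ((w + e)^m) * inverse (w + e) = ?I" by (simp add: inverse_mult_distrib)
  ultimately have "?c * ?A * inverse (w + e) + e^n * ?K * (?I * ?E) = e^n * ?K * ?I * (D + ?E)"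
    by (simp add: algebra_simps)
  also have "D + ?E = (of_nat n - of_nat m) * (of_nat n + of_nat m + 1) * ?P' + (of_nat n + of_nat m + 1) * D'"
    using arg_cong[OF euler_pderiv_pole_poly_harmonic[OF digamma_nat_Suc, of m n], of "\<lambda>p. poly p (murphy_var e w)"]
    unfolding D_def D'_def by (simp add: add_ac)
  also have "e^n * ?K * ?I * \<dots> = e^n * ?K' * (?I * ?P') + e^n * ?K' * ?I * D' / (of_nat n - of_nat m)"
  proof -
    have "x * ((of_nat n - of_nat m) * (of_nat n + of_nat m + 1) * p + (of_nat n + of_nat m + 1) * d) =
        (of_nat n - of_nat m) * (of_nat n + of_nat m + 1) * x * p
        + (of_nat n - of_nat m) * (of_nat n + of_nat m + 1) * x * d / (of_nat n - of_nat m)" for x p d :: complex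
      using mn by (simp add: field_simps)
    from this[of "e^n * ?K * ?I" ?P' D'] show ?thesis unfolding fact_ratio_Suc[OF mn] by (simp only: ac_simps)
  qed
  also have "e^n * ?K' * ?I * D' = ?c' * ?A'"
    unfolding D'_def by (rule murphy_poly_eq_pole_poly[OF e _ W, symmetric]) (use mn in simp)
  finally show ?thesis by (simp add: add_ac)
qed

lemma has_field_derivative_log_legendre_deriv:
  assumes e: "e^2 = 1" and mn: "m < n" and w: "w + e \<notin> \<real>\<^sub>\<le>\<^sub>0"
  shows "(log_legendre_deriv n e m has_field_derivative log_legendre_deriv n e (Suc m) w) (at w)"
proof -
  have W: "w + e \<noteq> 0" using w by auto
  define t where "t = murphy_var e w"
  define c where "c = e^(n + m) / 2^m"
  define c' where "c' = e^(n + Suc m) / 2^Suc m"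
  define \<Delta> where "\<Delta> = digamma_nat n - digamma_nat (n - m)"
  define A where "A = poly (murphy_poly n m (\<lambda>_. 1)) t"
  define A' where "A' = poly (murphy_poly n (Suc m) (\<lambda>_. 1)) t"
  define B' where "B' = poly (murphy_poly n (Suc m) digamma_nat) t"
  define R where "R = e^n * fact_ratio n m *
    (inverse ((w + e)^Suc m) * poly (euler_pderiv m (pole_poly n m digamma_nat)) t)"
  define R' where "R' = e^n * fact_ratio n (Suc m) *
    (inverse ((w + e)^Suc m) * poly (pole_poly n (Suc m) digamma_nat) t)"
  have dA: "((\<lambda>w. poly (murphy_poly n m f) (murphy_var e w)) has_field_derivative
      e / 2 * poly (murphy_poly n (Suc m) f) t) (at w)" for f
    using has_field_derivative_poly_comp[OF has_field_derivative_murphy_var, of "murphy_poly n m f" e w]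
    unfolding t_def pderiv_murphy_poly[OF mn] .
  have dL: "((\<lambda>w. Ln (w + e)) has_field_derivative inverse (w + e)) (at w)"
  proof -
    have "((\<lambda>w. w + e) has_field_derivative 1) (at w)" by (auto intro!: derivative_eq_intros)
    from DERIV_chain2[OF has_field_derivative_Ln[OF w] this] show ?thesis by simp
  qed
  note dP = has_field_derivative_pole_term[OF e W, of m "pole_poly n m digamma_nat"]
  note d = DERIV_add[OF DERIV_diff[OF DERIV_add[OF DERIV_mult'[OF DERIV_cmult[OF dA[of "\<lambda>_. 1"], of c] dL]
      DERIV_cmult[OF DERIV_cmult[OF dA[of "\<lambda>_. 1"], of c], of \<Delta>]] DERIV_cmult[OF dA[of digamma_nat], of c]]
      DERIV_cmult[OF dP, of "e^n * fact_ratio n m"]]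
  have log_legendre_deriv_eq: "log_legendre_deriv n e m = (\<lambda>x.
      c * poly (murphy_poly n m (\<lambda>_. 1)) (murphy_var e x) * Ln (x + e)
      + \<Delta> * (c * poly (murphy_poly n m (\<lambda>_. 1)) (murphy_var e x))
      - c * poly (murphy_poly n m digamma_nat) (murphy_var e x)
      + e^n * fact_ratio n m * (inverse ((x + e)^m) * poly (pole_poly n m digamma_nat) (murphy_var e x)))"
    unfolding c_def \<Delta>_def by (rule ext) (simp only: log_legendre_deriv_def)
  have recombination: "c * A * inverse (w + e) + R = c' * A' / (of_nat n - of_nat m) + R'"
    using pole_term_recombination[OF e mn W] unfolding c_def c'_def A_def A'_def R_def R'_def t_def .
  have half: "c * (e / 2 * x) = c' * x" for x unfolding c_def c'_def by (simp add: field_simps)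
  have "(c * A * inverse (w + e) + c * (e / 2 * A') * Ln (w + e)) + \<Delta> * (c * (e / 2 * A')) - c * (e / 2 * B') + R
      = c' * A' * Ln (w + e) + \<Delta> * (c' * A') - c' * B' + (c * A * inverse (w + e) + R)"
    unfolding half by (simp add: algebra_simps)
  also have "\<dots> = c' * A' * Ln (w + e) + (\<Delta> + 1 / (of_nat n - of_nat m)) * (c' * A') - c' * B' + R'"
    unfolding recombination by (simp add: algebra_simps)
  also have "\<dots> = log_legendre_deriv n e (Suc m) w"
    unfolding log_legendre_deriv_def digamma_nat_diff_Suc[OF mn] \<Delta>_def c'_def A'_def B'_def R'_def t_def ..
  finally have derivative_eq: "(c * A * inverse (w + e) + c * (e / 2 * A') * Ln (w + e))
      + \<Delta> * (c * (e / 2 * A')) - c * (e / 2 * B') + R = log_legendre_deriv n e (Suc m) w" .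
  show ?thesis
    unfolding log_legendre_deriv_eq
    by (rule DERIV_cong[OF d[folded t_def, folded A_def A'_def B'_def R_def] derivative_eq])
qed

lemma higher_deriv_Legendre_P_Ln:
  assumes e: "e^2 = 1" and "m \<le> n" "w + e \<notin> \<real>\<^sub>\<le>\<^sub>0"
  shows "(deriv ^^ m) (\<lambda>w. Legendre_P n w * Ln (w + e)) w = log_legendre_deriv n e m w"
  using assms(2,3)
proof (induction m arbitrary: w)
  case 0
  then show ?case using log_legendre_deriv_0[OF e] by simp
next
  case (Suc m)
  have "open ((\<lambda>w. w + e) -` (- \<real>\<^sub>\<le>\<^sub>0))"
    by (rule continuous_open_vimage) (auto intro!: continuous_intros)
  then have "\<forall>\<^sub>F x in nhds w. (deriv ^^ m) (\<lambda>w. Legendre_P n w * Ln (w + e)) x = log_legendre_deriv n e m x"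
    using Suc by (elim eventually_nhds_in_open[THEN eventually_mono]) auto
  then have "(deriv ^^ Suc m) (\<lambda>w. Legendre_P n w * Ln (w + e)) w = deriv (log_legendre_deriv n e m) w"
    by (simp add: deriv_cong_ev)
  also have "\<dots> = log_legendre_deriv n e (Suc m) w"
    using Suc.prems by (intro DERIV_imp_deriv has_field_derivative_log_legendre_deriv[OF e]) auto
  finally show ?case .
qed

lemma add_sign_notin_nonpos_Reals:
  assumes "z \<notin> complex_of_real ` {..1}" and "e = 1 \<or> e = -1"
  shows "z + e \<notin> \<real>\<^sub>\<le>\<^sub>0"
proof
  assume "z + e \<in> \<real>\<^sub>\<le>\<^sub>0"
  then have "Re (z + e) \<le> 0" "Im (z + e) = 0" by (auto simp: complex_nonpos_Reals_iff)
  then have "z = complex_of_real (Re z)" "Re z \<le> 1" using assms(2) by (auto simp: complex_eq_iff)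
  then show False using assms(1) by auto
qed

theorem mainTheorem1:
  fixes m n :: nat and \<epsilon> z :: complex
  assumes "m \<le> n"
    and "\<epsilon> = 1 \<or> \<epsilon> = -1"
    and "z \<notin> complex_of_real ` {..1}"
  shows "(deriv ^^ m) (\<lambda>w. Legendre_P n w * Ln (w + \<epsilon>)) z =
      of_nat (fact (2*m)) / (2^m * of_nat (fact m)) * Gegenbauer_C (n - m) (of_nat m + 1/2) z * Ln (z + \<epsilon>)
    + of_nat (fact (2*m)) / (2^m * of_nat (fact m))
        * (Digamma (of_nat (n + 1)) - Digamma (of_nat (n - m + 1))) * Gegenbauer_C (n - m) (of_nat m + 1/2) z
    - \<epsilon>^(n+m) / 2^m * (\<Sum>k\<le>n - m. \<epsilon>^k * of_nat (fact (k + n + m)) * Digamma (of_nat (k + n + m + 1))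
        / (of_nat (fact k) * of_nat (fact (k + m)) * of_nat (fact (n - m - k))) * ((z - \<epsilon>) / 2)^k)
    + \<epsilon>^n * of_nat (fact (n + m)) / of_nat (fact (n - m)) * inverse ((z + \<epsilon>)^m)
        * (\<Sum>k\<le>n. \<epsilon>^k * of_nat (fact (k + n)) * Digamma (of_nat (k + n + 1))
        / (of_nat (fact k) * of_nat (fact (k + m)) * of_nat (fact (n - k))) * ((z - \<epsilon>) / 2)^k)"
  (is "_ = ?rhs")
proof -
  have e: "\<epsilon>^2 = 1" using assms(2) by auto
  have G: "fact (2*m) / (2^m * fact m) * Gegenbauer_C (n - m) (of_nat m + 1/2) z =
      \<epsilon>^(n + m) / 2^m * poly (murphy_poly n m (\<lambda>_. 1)) (murphy_var \<epsilon> z)"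
    using Gegenbauer_C_eq_higher_deriv_Legendre_P[OF assms(1)] higher_deriv_Legendre_P[OF e assms(1)] by simp
  have "(deriv ^^ m) (\<lambda>w. Legendre_P n w * Ln (w + \<epsilon>)) z = log_legendre_deriv n \<epsilon> m z"
    using higher_deriv_Legendre_P_Ln[OF e assms(1) add_sign_notin_nonpos_Reals[OF assms(3,2)]] .
  also have "\<dots> = ?rhs"
    unfolding log_legendre_deriv_def G[symmetric]
    unfolding poly_murphy_poly_murphy_var poly_pole_poly_murphy_var murphy_coeff_def pole_coeff_def
      fact_ratio_def digamma_nat_def of_nat_fact
    by (simp add: ac_simps)
  finally show ?thesis .
qed

end
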